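(* Let $mG^{(0)}$ be a finite canonical misinformation game, let $\mathcal{AD}^{\infty}(\{mG^{(0)}\})$ be the Stable Set of the Adaptation Procedure on $mG^{(0)}$, and let $\mathcal{T}$ be its terminal set. Then $$\mathcal{AD}^{\infty}(\{mG^{(0)}\}) = \mathcal{AD}^{*}(\mathcal{T}).$$
   Context: A normal-form game is $G=\langle N,S,P\rangle$ with a finite set of players $N$, finite pure strategy sets $S_i$ ($i\in N$), set of pure strategy profiles (positions) $S=\times_{i\in N}S_i$, and payoffs $P=(P_i)_{i\in N}$ with $P_i:S\to\mathbb{R}$. A misinformation game is a tuple $mG=\langle G^0,G^1,\dots,G^{|N|}\rangle$ of normal-form games, $G^0$ (the actual game) having $|N|$ players; $G^i$ is the subjective game of player $i$. It is canonical if every $G^i$ differs from $G^0$ only in its payoffs (so $G^i=\langle N,S,P^i\rangle$ for all $i$) and in every $G^i$ all players have the same number of pure strategies. A misinformed strategy profile $\sigma=(\sigma_1,\dots,\sigma_{|N|})$ is a natural misinformed equilibrium (nme) if for each $i$, $\sigma_i$ is player $i$'s component of some (mixed) Nash equilibrium of $G^i$; $NME(mG)$ denotes the set of these. For a profile $\sigma$, $\chi(\sigma)=\mathrm{supp}(\sigma_1)\times\dots\times\mathrm{supp}(\sigma_{|N|})\subseteq S$. For a position $\vec v\in S$, the $\vec v$-update $mG_{\vec v}$ is the misinformation game $\langle G^0,G'^1,\dots,G'^{|N|}\rangle$ where $G'^i=\langle N,S,P'^i\rangle$ with $P'^i(\vec v)=P^0(\vec v)$ (the whole payoff vector) and $P'^i(\vec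 u)=P^i(\vec u)$ for $\vec u\neq\vec v$. For a set $M$ of misinformation games, $\mathcal{AD}(M)=\{mG_{\vec u}: mG\in M,\ \sigma\in NME(mG),\ \vec u\in\chi(\sigma)\}$; $\mathcal{AD}^{(0)}(M)=M$ and $\mathcal{AD}^{(t+1)}(M)=\mathcal{AD}^{(t)}(\mathcal{AD}(M))$. The procedure terminates at the smallest $t\ge0$ with $\mathcal{AD}^{(t+1)}(M)=\mathcal{AD}^{(t)}(M)$; this $t$ is the length $\mathfrak{L}$, and $\mathcal{AD}^{\infty}(M)=\mathcal{AD}^{(\mathfrak{L})}(M)$ is the Stable Set. $\mathcal{AD}^{*}(M)=\bigcup_{t\ge0}\mathcal{AD}^{(t)}(M)$. The terminal set of the Adaptation Procedure on $mG^{(0)}$ is $\mathcal{T}=\{mG\in\mathcal{AD}^*(\{mG^{(0)}\}) : mG\in\mathcal{AD}(\{mG\})\}$. *)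

theory Defs
  imports Complex_Main "HOL-Library.FuncSet"
begin

text \<open>Players are the elements of a finite type 'p (the set N = UNIV).
  Player j's pure strategy set is St j.
  A canonical misinformation game is a pair (P0, Ps): P0 is the payoff of the
  actual game G^0 and Ps i is the payoff of the subjective game G^i of player i;
  all games share the strategy sets St (canonicity).\<close>

type_synonym ('p, 's) payoff = "('p \<Rightarrow> 's) \<Rightarrow> 'p \<Rightarrow> real"
type_synonym ('p, 's) mgame = "('p, 's) payoff \<times> ('p \<Rightarrow> ('p, 's) payoff)"

definition positions :: "('p \<Rightarrow> 's set) \<Rightarrow> ('p \<Rightarrow> 's) set" where
  "positions St = PiE UNIV St"

definition mixed_strategy :: "'s set \<Rightarrow> ('s \<Rightarrow> real) \<Rightarrow> bool" where
  "mixed_strategy A \<tau> \<longleftrightarrow> (\<forall>s. 0 \<le> \<tau> s) \<and> (\<forall>s. s \<notin> A \<longrightarrow> \<tau> s = 0) \<and> sum \<tau> A = 1"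

definition mixed_profile :: "('p \<Rightarrow> 's set) \<Rightarrow> ('p \<Rightarrow> 's \<Rightarrow> real) \<Rightarrow> bool" where
  "mixed_profile St \<sigma> \<longleftrightarrow> (\<forall>i. mixed_strategy (St i) (\<sigma> i))"

definition exp_payoff :: "('p::finite \<Rightarrow> 's set) \<Rightarrow> ('p, 's) payoff \<Rightarrow> ('p \<Rightarrow> 's \<Rightarrow> real) \<Rightarrow> 'p \<Rightarrow> real" where
  "exp_payoff St P \<sigma> i = (\<Sum>v\<in>positions St. (\<Prod>j\<in>UNIV. \<sigma> j (v j)) * P v i)"

definition nash_eq :: "('p::finite \<Rightarrow> 's set) \<Rightarrow> ('p, 's) payoff \<Rightarrow> ('p \<Rightarrow> 's \<Rightarrow> real) \<Rightarrow> bool" where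
  "nash_eq St P \<sigma> \<longleftrightarrow> mixed_profile St \<sigma> \<and>
     (\<forall>i \<tau>. mixed_strategy (St i) \<tau> \<longrightarrow> exp_payoff St P (\<sigma>(i := \<tau>)) i \<le> exp_payoff St P \<sigma> i)"

definition nme :: "('p::finite \<Rightarrow> 's set) \<Rightarrow> ('p, 's) mgame \<Rightarrow> ('p \<Rightarrow> 's \<Rightarrow> real) \<Rightarrow> bool" where
  "nme St mG \<sigma> \<longleftrightarrow> (\<forall>i. \<exists>\<tau>. nash_eq St (snd mG i) \<tau> \<and> \<sigma> i = \<tau> i)"

definition chi :: "('p \<Rightarrow> 's \<Rightarrow> real) \<Rightarrow> ('p \<Rightarrow> 's) set" where
  "chi \<sigma> = PiE UNIV (\<lambda>i. {s. \<sigma> i s \<noteq> 0})"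

definition mg_update :: "('p, 's) mgame \<Rightarrow> ('p \<Rightarrow> 's) \<Rightarrow> ('p, 's) mgame" where
  "mg_update mG v = (fst mG, \<lambda>i. (snd mG i)(v := fst mG v))"

definition AD :: "('p::finite \<Rightarrow> 's set) \<Rightarrow> ('p, 's) mgame set \<Rightarrow> ('p, 's) mgame set" where
  "AD St M = {mg_update mG u | mG \<sigma> u. mG \<in> M \<and> nme St mG \<sigma> \<and> u \<in> chi \<sigma>}"

text \<open>AD^(t)(M) = (AD ^^ t) M, since AD^(t+1)(M) = AD^(t)(AD(M)).\<close>
definition AD_iter :: "('p::finite \<Rightarrow> 's set) \<Rightarrow> nat \<Rightarrow> ('p, 's) mgame set \<Rightarrow> ('p, 's) mgame set" where
  "AD_iter St t M = (AD St ^^ t) M"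

definition AD_length :: "('p::finite \<Rightarrow> 's set) \<Rightarrow> ('p, 's) mgame set \<Rightarrow> nat" where
  "AD_length St M = (LEAST t. AD_iter St (Suc t) M = AD_iter St t M)"

definition AD_inf :: "('p::finite \<Rightarrow> 's set) \<Rightarrow> ('p, 's) mgame set \<Rightarrow> ('p, 's) mgame set" where
  "AD_inf St M = AD_iter St (AD_length St M) M"

definition AD_star :: "('p::finite \<Rightarrow> 's set) \<Rightarrow> ('p, 's) mgame set \<Rightarrow> ('p, 's) mgame set" where
  "AD_star St M = (\<Union>t. AD_iter St t M)"

definition terminal_set :: "('p::finite \<Rightarrow> 's set) \<Rightarrow> ('p, 's) mgame \<Rightarrow> ('p, 's) mgame set" where
  "terminal_set St mG0 = {mG \<in> AD_star St {mG0}. mG \<in> AD St {mG}}"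

end

theory Submission
  imports Defs
begin

text \<open>Every adaptation step either leaves a game unchanged or adds a new position to the
  finite set of positions at which all subjective payoffs already equal the actual ones.
  So along any run of more than N = |S| steps some game is its own successor, i.e. the run
  passes through a terminal game; conversely, a game reachable at all is reachable in at
  most N steps, and waiting at a terminal game pads such a run to any length beyond 2N.
  Hence for t > 2N the set AD^(t) consists exactly of the games reachable from terminal
  ones; in particular it is stationary, so it is the Stable Set.\<close>

lemma relpowp_self_loop: "R z z \<Longrightarrow> (R ^^ n) z z"
  by (induction n) (auto intro: relpowp_Suc_I)

lemma relpowp_passes_loop_or_increases:
  fixes f :: "'a \<Rightarrow> nat"
  assumes step: "\<And>x y. R x y \<Longrightarrow> x = y \<or> f x < f y"
    and "(R ^^ n) x y"
  shows "(\<exists>z. R\<^sup>*\<^sup>* x z \<and> R z z \<and> R\<^sup>*\<^sup>* z y) \<or> f x + n \<le> f y"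
  using \<open>(R ^^ n) x y\<close>
proof (induction n arbitrary: y)
  case 0
  then show ?case by simp
next
  case (Suc n)
  then obtain z where xz: "(R ^^ n) x z" and zy: "R z y"
    by (auto elim: relpowp_Suc_E)
  from Suc.IH[OF xz] show ?case
  proof
    assume "\<exists>w. R\<^sup>*\<^sup>* x w \<and> R w w \<and> R\<^sup>*\<^sup>* w z"
    with zy show ?case
      by (meson rtranclp.rtrancl_into_rtrancl)
  next
    assume "f x + n \<le> f z"
    with step[OF zy] show ?case
      using zy relpowp_imp_rtranclp[OF xz] by auto
  qed
qed

lemma rtranclp_imp_relpowp_increases:
  fixes f :: "'a \<Rightarrow> nat"
  assumes step: "\<And>x y. R x y \<Longrightarrow> x = y \<or> f x < f y"
    and "R\<^sup>*\<^sup>* x y"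
  shows "\<exists>m. (R ^^ m) x y \<and> f x + m \<le> f y"
  using \<open>R\<^sup>*\<^sup>* x y\<close>
proof (induction rule: rtranclp_induct)
  case base
  then show ?case by (auto intro: exI[of _ 0])
next
  case (step y z)
  then obtain m where "(R ^^ m) x y" "f x + m \<le> f y" by blast
  with step.hyps(2) assms(1)[OF step.hyps(2)] show ?case
    by (metis add_Suc_right Suc_leI le_less_trans relpowp_Suc_I)
qed

lemma relpowp_iff_passes_loop:
  fixes f :: "'a \<Rightarrow> nat"
  assumes step: "\<And>x y. R x y \<Longrightarrow> x = y \<or> f x < f y"
    and bound: "\<And>x. f x \<le> N"
    and "2 * N < n"
  shows "(R ^^ n) x y \<longleftrightarrow> (\<exists>z. R\<^sup>*\<^sup>* x z \<and> R z z \<and> R\<^sup>*\<^sup>* z y)"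
proof
  assume "(R ^^ n) x y"
  then show "\<exists>z. R\<^sup>*\<^sup>* x z \<and> R z z \<and> R\<^sup>*\<^sup>* z y"
    using relpowp_passes_loop_or_increases[OF step] bound[of y] \<open>2 * N < n\<close> by fastforce
next
  assume "\<exists>z. R\<^sup>*\<^sup>* x z \<and> R z z \<and> R\<^sup>*\<^sup>* z y"
  then obtain z where xz: "R\<^sup>*\<^sup>* x z" and zz: "R z z" and zy: "R\<^sup>*\<^sup>* z y"
    by blast
  obtain a where a: "(R ^^ a) x z" "a \<le> N"
    using rtranclp_imp_relpowp_increases[OF step xz] bound[of z] by fastforce
  obtain b where b: "(R ^^ b) z y" "b \<le> N"
    using rtranclp_imp_relpowp_increases[OF step zy] bound[of y] by fastforce
  have "(R ^^ (a + (n - a - b) + b)) x y"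
    unfolding relpowp_add using a(1) relpowp_self_loop[of R z, OF zz] b(1) by blast
  moreover have "a + (n - a - b) + b = n"
    using a(2) b(2) \<open>2 * N < n\<close> by linarith
  ultimately show "(R ^^ n) x y" by simp
qed

lemma funpow_stationary:
  fixes F :: "'a \<Rightarrow> 'a"
  assumes "(F ^^ Suc n) x = (F ^^ n) x" and "n \<le> m"
  shows "(F ^^ m) x = (F ^^ n) x"
proof -
  have "(F ^^ k) ((F ^^ n) x) = (F ^^ n) x" for k
    using assms(1) by (induction k) auto
  then show ?thesis
    using \<open>n \<le> m\<close> by (metis funpow_add le_add_diff_inverse2 o_apply)
qed

lemma AD_inf_eq_AD_iter:
  assumes "AD_iter St (Suc k) M = AD_iter St k M"
  shows "AD_inf St M = AD_iter St k M"
proof -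
  let ?stationary = "\<lambda>t. AD_iter St (Suc t) M = AD_iter St t M"
  let ?L = "AD_length St M"
  have "?stationary ?L"
    unfolding AD_length_def by (rule LeastI[of ?stationary, OF assms])
  moreover have "?L \<le> k"
    unfolding AD_length_def by (rule Least_le[of ?stationary, OF assms])
  ultimately have "(AD St ^^ k) M = (AD St ^^ ?L) M"
    unfolding AD_iter_def by (rule funpow_stationary)
  then show ?thesis
    unfolding AD_inf_def AD_iter_def by simp
qed

definition adapt_step :: "('p::finite \<Rightarrow> 's set) \<Rightarrow> ('p, 's) mgame \<Rightarrow> ('p, 's) mgame \<Rightarrow> bool" where
  "adapt_step St mG mG' \<longleftrightarrow> mG' \<in> AD St {mG}"

lemma AD_eq_adapt_step: "AD St M = {mG'. \<exists>mG\<in>M. adapt_step St mG mG'}"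
  unfolding AD_def adapt_step_def by blast

lemma AD_iter_eq_relpowp:
  "AD_iter St n M = {mG'. \<exists>mG\<in>M. (adapt_step St ^^ n) mG mG'}"
proof (induction n)
  case 0
  then show ?case by (simp add: AD_iter_def)
next
  case (Suc n)
  have "AD_iter St (Suc n) M = AD St (AD_iter St n M)"
    by (simp add: AD_iter_def)
  then show ?case
    unfolding Suc AD_eq_adapt_step relpowp.simps(2) by blast
qed

lemma AD_star_eq_rtranclp:
  "AD_star St M = {mG'. \<exists>mG\<in>M. (adapt_step St)\<^sup>*\<^sup>* mG mG'}"
  unfolding AD_star_def AD_iter_eq_relpowp rtranclp_power by blast

lemma terminal_set_eq_rtranclp:
  "terminal_set St mG0 = {mG. (adapt_step St)\<^sup>*\<^sup>* mG0 mG \<and> adapt_step St mG mG}"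
  unfolding terminal_set_def AD_star_eq_rtranclp adapt_step_def by blast

definition agreement_set :: "('p \<Rightarrow> 's set) \<Rightarrow> ('p, 's) mgame \<Rightarrow> ('p \<Rightarrow> 's) set" where
  "agreement_set St mG = {v \<in> positions St. \<forall>i. snd mG i v = fst mG v}"

lemma card_agreement_set_le:
  "finite (positions St) \<Longrightarrow> card (agreement_set St mG) \<le> card (positions St)"
  unfolding agreement_set_def by (rule card_mono) auto

lemma chi_subset_positions:
  assumes "nme St mG \<sigma>"
  shows "chi \<sigma> \<subseteq> positions St"
proof
  fix u assume u: "u \<in> chi \<sigma>"
  have "u i \<in> St i" for i
  proof -
    from assms obtain \<tau> where "nash_eq St (snd mG i) \<tau>" and "\<sigma> i = \<tau> i"
      unfolding nme_def by blast
    then have "mixed_strategy (St i) (\<sigma> i)"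
      unfolding nash_eq_def mixed_profile_def by auto
    moreover have "\<sigma> i (u i) \<noteq> 0"
      using u unfolding chi_def by auto
    ultimately show ?thesis
      unfolding mixed_strategy_def by auto
  qed
  then show "u \<in> positions St"
    unfolding positions_def by auto
qed

lemma adapt_stepE:
  assumes "adapt_step St mG mG'"
  obtains u where "u \<in> positions St" and "mG' = mg_update mG u"
  using assms chi_subset_positions unfolding adapt_step_def AD_def by blast

lemma agreement_set_mg_update:
  "u \<in> positions St \<Longrightarrow> agreement_set St (mg_update mG u) = insert u (agreement_set St mG)"
  unfolding agreement_set_def mg_update_def by auto

lemma mg_update_agreed:
  assumes "u \<in> agreement_set St mG"
  shows "mg_update mG u = mG"
proof -
  have "(\<lambda>i. (snd mG i)(u := fst mG u)) = snd mG"
    using assms unfolding agreement_set_def by (intro ext fun_upd_idem) auto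
  then show ?thesis
    unfolding mg_update_def by simp
qed

lemma adapt_step_increases_agreement:
  assumes "finite (positions St)" and "adapt_step St mG mG'"
  shows "mG = mG' \<or> card (agreement_set St mG) < card (agreement_set St mG')"
proof -
  obtain u where u: "u \<in> positions St" and mG': "mG' = mg_update mG u"
    using assms(2) by (rule adapt_stepE)
  have fin: "finite (agreement_set St mG)"
    using assms(1) unfolding agreement_set_def by auto
  show ?thesis
  proof (cases "u \<in> agreement_set St mG")
    case True
    then show ?thesis using mG' mg_update_agreed by metis
  next
    case False
    then show ?thesis using mG' agreement_set_mg_update[OF u] fin by auto
  qed
qed

theorem theorem1:
  fixes St :: "'p::finite \<Rightarrow> 's set"
    and mG0 :: "('p, 's) mgame"
  assumes "\<And>j. finite (St j)"
    and "\<And>j. St j \<noteq> {}"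
  shows "AD_inf St {mG0} = AD_star St (terminal_set St mG0)"
proof -
  have fin: "finite (positions St)"
    unfolding positions_def using assms(1) by (intro finite_PiE) auto
  define N where "N = card (positions St)"
  have stable: "AD_iter St t {mG0} = AD_star St (terminal_set St mG0)" if "2 * N < t" for t
    unfolding AD_iter_eq_relpowp AD_star_eq_rtranclp terminal_set_eq_rtranclp
    using relpowp_iff_passes_loop[OF adapt_step_increases_agreement[OF fin]
        card_agreement_set_le[OF fin, folded N_def] that]
    by auto
  then have "AD_inf St {mG0} = AD_iter St (Suc (2 * N)) {mG0}"
    by (intro AD_inf_eq_AD_iter) simp
  also have "\<dots> = AD_star St (terminal_set St mG0)"
    by (rule stable) simp
  finally show ?thesis .
qed

end
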